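(* Let $T$ be a locally finite simplicial tree and let $G=\langle g_1,\dots,g_r\rangle$ be a discrete non-elementary subgroup of $\mathrm{Isom}(T)$. If $h\in G$ has infinite order, then $\langle g_i,h\rangle$ is non-elementary for some $i\in\{1,\dots,r\}$.
   Context: $\mathrm{Isom}(T)$ carries the topology of pointwise convergence. A subgroup is elementary if it stabilises a vertex, an end, or a pair of ends of $T$, and non-elementary otherwise. *)

theory Defs
  imports "HOL-Analysis.Analysis"
begin

text \<open>A simplicial tree is given by its vertex set (the whole type 'v) and a
symmetric irreflexive adjacency relation adj.\<close>

definition is_cycle :: "('v \<Rightarrow> 'v \<Rightarrow> bool) \<Rightarrow> 'v list \<Rightarrow> bool" where
  "is_cycle adj xs \<longleftrightarrow> length xs \<ge> 3 \<and> distinct xs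
     \<and> (\<forall>i. Suc i < length xs \<longrightarrow> adj (xs ! i) (xs ! Suc i))
     \<and> adj (last xs) (hd xs)"

definition simplicial_tree :: "('v \<Rightarrow> 'v \<Rightarrow> bool) \<Rightarrow> bool" where
  "simplicial_tree adj \<longleftrightarrow>
     (\<forall>x y. adj x y \<longrightarrow> adj y x) \<and> (\<forall>x. \<not> adj x x)
     \<and> (\<forall>x y. adj\<^sup>*\<^sup>* x y) \<and> (\<forall>xs. \<not> is_cycle adj xs)"

definition locally_finite :: "('v \<Rightarrow> 'v \<Rightarrow> bool) \<Rightarrow> bool" where
  "locally_finite adj \<longleftrightarrow> (\<forall>x. finite {y. adj x y})"

text \<open>Isometries of T = graph automorphisms of T (inversions allowed).\<close>
definition isom :: "('v \<Rightarrow> 'v \<Rightarrow> bool) \<Rightarrow> ('v \<Rightarrow> 'v) \<Rightarrow> bool" where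
  "isom adj f \<longleftrightarrow> bij f \<and> (\<forall>x y. adj x y \<longleftrightarrow> adj (f x) (f y))"

definition gen_group :: "('v \<Rightarrow> 'v) set \<Rightarrow> ('v \<Rightarrow> 'v) set" where
  "gen_group S = \<Inter>{H. S \<subseteq> H \<and> id \<in> H \<and> (\<forall>f\<in>H. \<forall>g\<in>H. f \<circ> g \<in> H)
                        \<and> (\<forall>f\<in>H. inv f \<in> H)}"

definition discrete_subgroup :: "('v \<Rightarrow> 'v) set \<Rightarrow> bool" where
  "discrete_subgroup G \<longleftrightarrow>
     subtopology (product_topology (\<lambda>_. discrete_topology UNIV) UNIV) G = discrete_topology G"

text \<open>Rays (geodesic rays = non-backtracking infinite edge paths) and ends.\<close>
definition ray :: "('v \<Rightarrow> 'v \<Rightarrow> bool) \<Rightarrow> (nat \<Rightarrow> 'v) \<Rightarrow> bool" where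
  "ray adj r \<longleftrightarrow> (\<forall>n. adj (r n) (r (Suc n)) \<and> r n \<noteq> r (Suc (Suc n)))"

definition same_end :: "(nat \<Rightarrow> 'v) \<Rightarrow> (nat \<Rightarrow> 'v) \<Rightarrow> bool" where
  "same_end r s \<longleftrightarrow> (\<exists>k m. \<forall>n. r (n + k) = s (n + m))"

definition elementary :: "('v \<Rightarrow> 'v \<Rightarrow> bool) \<Rightarrow> ('v \<Rightarrow> 'v) set \<Rightarrow> bool" where
  "elementary adj H \<longleftrightarrow>
     (\<exists>v. \<forall>g\<in>H. g v = v)
   \<or> (\<exists>r. ray adj r \<and> (\<forall>g\<in>H. same_end (g \<circ> r) r))
   \<or> (\<exists>r s. ray adj r \<and> ray adj s \<and> \<not> same_end r s \<and>
        (\<forall>g\<in>H. (same_end (g \<circ> r) r \<and> same_end (g \<circ> s) s)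
               \<or> (same_end (g \<circ> r) s \<and> same_end (g \<circ> s) r)))"

end

theory Submission
  imports Defs
begin

text \<open>Discreteness makes vertex stabilisers finite, so no positive power of the infinite-order
  element h fixes a vertex: h is hyperbolic, and u = h \<circ> h translates an axis with an attracting
  end and a repelling end, the only ends fixed by u. An element of the group fixing one end of the
  axis fixes the other: it either fixes a tail of the axis, hence commutes with a power of u by
  finiteness of stabilisers, or translates a tail, and then a power of it commutes with a power
  of u. So if every gen_group {g i, h} were elementary, each g i would preserve the pair of axis
  ends, and then so would G, making G elementary.\<close>

section \<open>Backtrack-free walks in trees\<close>

fun walk :: "('v \<Rightarrow> 'v \<Rightarrow> bool) \<Rightarrow> 'v list \<Rightarrow> bool" where
  "walk adj [] = False"
| "walk adj [x] = True"
| "walk adj (x # y # ys) = (adj x y \<and> walk adj (y # ys))"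

fun non_backtracking :: "'v list \<Rightarrow> bool" where
  "non_backtracking (x # y # z # zs) = (x \<noteq> z \<and> non_backtracking (y # z # zs))"
| "non_backtracking _ = True"

lemma walk_iff_nth:
  "walk adj xs \<longleftrightarrow> xs \<noteq> [] \<and> (\<forall>i. Suc i < length xs \<longrightarrow> adj (xs ! i) (xs ! Suc i))"
proof (induction adj xs rule: walk.induct)
  case (3 adj x y ys)
  show ?case
    by (simp add: 3) (auto simp: nth_Cons split: nat.splits)
qed auto

lemma non_backtracking_iff_nth:
  "non_backtracking xs \<longleftrightarrow> (\<forall>i. Suc (Suc i) < length xs \<longrightarrow> xs ! i \<noteq> xs ! Suc (Suc i))"
proof (induction xs rule: non_backtracking.induct)
  case (1 x y z zs)
  show ?case
    by (simp add: 1) (auto simp: nth_Cons split: nat.splits)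
qed auto

lemma walk_tl: "walk adj (x # xs) \<Longrightarrow> xs \<noteq> [] \<Longrightarrow> walk adj xs"
  by (cases xs) auto

lemma non_backtracking_tl: "non_backtracking (x # xs) \<Longrightarrow> non_backtracking xs"
  by (cases xs rule: non_backtracking.cases) auto

lemma walk_butlast: "walk adj xs \<Longrightarrow> 2 \<le> length xs \<Longrightarrow> walk adj (butlast xs)"
proof (induction adj xs rule: walk.induct)
  case (3 adj x y ys)
  then show ?case by (cases ys) auto
qed auto

lemma non_backtracking_butlast: "non_backtracking xs \<Longrightarrow> non_backtracking (butlast xs)"
proof (induction xs rule: non_backtracking.induct)
  case (1 x y z zs)
  then show ?case by (cases zs) auto
qed auto

lemma walk_snoc: "walk adj xs \<Longrightarrow> adj (last xs) z \<Longrightarrow> walk adj (xs @ [z])"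
  by (induction adj xs rule: walk.induct) auto

lemma walk_map_isom: "isom adj f \<Longrightarrow> walk adj xs \<Longrightarrow> walk adj (map f xs)"
  by (induction adj xs rule: walk.induct) (auto simp: isom_def)

lemma non_backtracking_map_inj: "inj f \<Longrightarrow> non_backtracking xs \<Longrightarrow> non_backtracking (map f xs)"
  by (induction xs rule: non_backtracking.induct) (auto simp: inj_eq)

lemma non_backtracking_rev: "non_backtracking (rev xs) \<longleftrightarrow> non_backtracking xs"
proof -
  have "non_backtracking (rev xs)" if "non_backtracking xs" for xs :: "'a list"
    unfolding non_backtracking_iff_nth
  proof (intro allI impI)
    fix i assume i: "Suc (Suc i) < length (rev xs)"
    let ?j = "length xs - Suc (Suc (Suc i))"
    have "xs ! ?j \<noteq> xs ! Suc (Suc ?j)"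
      using that i unfolding non_backtracking_iff_nth by simp
    moreover have "Suc (Suc ?j) = length xs - Suc i" using i by simp
    ultimately show "rev xs ! i \<noteq> rev xs ! Suc (Suc i)" using i by (simp add: rev_nth)
  qed
  from this[of xs] this[of "rev xs"] show ?thesis by auto
qed

lemma distinct_hd_eq_last: "distinct ys \<Longrightarrow> ys \<noteq> [] \<Longrightarrow> hd ys = last ys \<Longrightarrow> length ys = 1"
  by (metis One_nat_def distinct.simps(2) hd_Cons_tl last_in_set length_Cons list.size(3) last.simps)

lemma reduced_walk_append:
  "walk adj (xs @ [x]) \<Longrightarrow> non_backtracking (xs @ [x]) \<Longrightarrow> walk adj (x # ys) \<Longrightarrow> non_backtracking (x # ys)
   \<Longrightarrow> (xs \<noteq> [] \<and> ys \<noteq> [] \<longrightarrow> last xs \<noteq> hd ys)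
   \<Longrightarrow> walk adj (xs @ x # ys) \<and> non_backtracking (xs @ x # ys)"
proof (induction xs)
  case (Cons z zs)
  note prems = Cons.prems
  have IH: "walk adj (zs @ x # ys) \<and> non_backtracking (zs @ x # ys)"
  proof (rule Cons.IH)
    show "walk adj (zs @ [x])" using prems(1) walk_tl[of adj z "zs @ [x]"] by simp
    show "non_backtracking (zs @ [x])" using prems(2) non_backtracking_tl by fastforce
  qed (use prems in auto)
  show ?case
  proof (cases zs)
    case Nil
    then show ?thesis using prems IH by (cases ys) auto
  next
    case (Cons w ws)
    then show ?thesis using prems(1,2) IH by (cases ws) simp_all
  qed
qed simp

lemma reduced_walk_glue:
  assumes "walk adj xs" "non_backtracking xs" "walk adj ys" "non_backtracking ys" "last xs = hd ys"
    and "2 \<le> length xs \<and> 2 \<le> length ys \<longrightarrow> last (butlast xs) \<noteq> hd (tl ys)"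
  shows "walk adj (xs @ tl ys) \<and> non_backtracking (xs @ tl ys)"
proof -
  have xne: "xs \<noteq> []" and yne: "ys \<noteq> []" using assms(1,3) by auto
  have xs: "xs = butlast xs @ [last xs]" using xne by simp
  have ys: "ys = hd ys # tl ys" using yne by simp
  have "walk adj (butlast xs @ last xs # tl ys) \<and> non_backtracking (butlast xs @ last xs # tl ys)"
  proof (rule reduced_walk_append)
    show "walk adj (butlast xs @ [last xs])" "non_backtracking (butlast xs @ [last xs])"
      using assms(1,2) xs by metis+
    show "walk adj (last xs # tl ys)" "non_backtracking (last xs # tl ys)"
      using assms(3,4,5) ys by metis+
    show "butlast xs \<noteq> [] \<and> tl ys \<noteq> [] \<longrightarrow> last (butlast xs) \<noteq> hd (tl ys)"
    proof
      assume "butlast xs \<noteq> [] \<and> tl ys \<noteq> []"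
      then have "2 \<le> length xs \<and> 2 \<le> length ys" using xne yne
        by (cases xs; cases ys) (auto simp: Suc_le_eq)
      then show "last (butlast xs) \<noteq> hd (tl ys)" using assms(6) by blast
    qed
  qed
  moreover have "xs @ tl ys = butlast xs @ last xs # tl ys"
    using xne by (metis append_butlast_last_id append_Cons append_Nil append_assoc)
  ultimately show ?thesis by (simp only:)
qed

lemma walk_reduce:
  "walk adj xs \<Longrightarrow> \<exists>ys. walk adj ys \<and> non_backtracking ys \<and> hd ys = hd xs \<and> last ys = last xs"
proof (induction xs)
  case (Cons x xs')
  show ?case
  proof (cases "xs' = []")
    case True then show ?thesis by (intro exI[of _ "[x]"]) simp
  next
    case False
    obtain ys where ys: "walk adj ys" "non_backtracking ys" "hd ys = hd xs'" "last ys = last xs'"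
      using Cons.IH walk_tl[OF Cons.prems False] by blast
    obtain y ys' where y: "ys = y # ys'" using ys(1) by (cases ys) auto
    have "adj x y" using Cons.prems False ys(3) y by (cases xs') auto
    show ?thesis
    proof (cases ys')
      case Nil
      then show ?thesis using y ys \<open>adj x y\<close> False by (intro exI[of _ "[x, y]"]) auto
    next
      case (Cons z zs)
      show ?thesis
      proof (cases "x = z")
        case True
        then show ?thesis using ys y Cons walk_tl[of adj y ys'] non_backtracking_tl[of y ys'] False
          by (intro exI[of _ ys']) auto
      next
        case False
        then show ?thesis using ys y Cons \<open>adj x y\<close> \<open>xs' \<noteq> []\<close> by (intro exI[of _ "x # ys"]) auto
      qed
    qed
  qed
qed simp

lemma isom_id: "isom adj id"
  by (simp add: isom_def)

lemma isom_comp: "isom adj f \<Longrightarrow> isom adj g \<Longrightarrow> isom adj (f \<circ> g)"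
  by (auto simp: isom_def bij_comp)

lemma isom_inv: "isom adj f \<Longrightarrow> isom adj (inv f)"
  unfolding isom_def by (metis bij_imp_bij_inv bij_inv_eq_iff)

lemma isom_funpow: "isom adj f \<Longrightarrow> isom adj (f ^^ n)"
  by (induction n) (auto simp: isom_id isom_comp)

locale tree =
  fixes adj :: "'v \<Rightarrow> 'v \<Rightarrow> bool"
  assumes adj_sym: "adj x y \<Longrightarrow> adj y x"
    and adj_irrefl: "\<not> adj x x"
    and connected: "adj\<^sup>*\<^sup>* x y"
    and no_cycle: "\<not> is_cycle adj xs"

lemma tree_if_simplicial_tree: "simplicial_tree adj \<Longrightarrow> tree adj"
  unfolding simplicial_tree_def by unfold_locales blast+

context tree
begin

lemma walk_rev: "walk adj (rev xs) \<longleftrightarrow> walk adj xs"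
proof -
  have "walk adj (rev xs)" if "walk adj xs" for xs
    unfolding walk_iff_nth
  proof (intro conjI allI impI)
    show "rev xs \<noteq> []" using that by auto
    fix i assume i: "Suc i < length (rev xs)"
    let ?j = "length xs - Suc (Suc i)"
    have "adj (xs ! ?j) (xs ! Suc ?j)" using that i unfolding walk_iff_nth by simp
    moreover have "Suc ?j = length xs - Suc i" using i by simp
    ultimately show "adj (rev xs ! i) (rev xs ! Suc i)" using i by (simp add: rev_nth adj_sym)
  qed
  from this[of xs] this[of "rev xs"] show ?thesis by auto
qed

text \<open>A backtrack-free walk that revisits a vertex would close up a cycle at its first return.\<close>
lemma reduced_walk_distinct: "walk adj xs \<Longrightarrow> non_backtracking xs \<Longrightarrow> distinct xs"
proof (induction xs)
  case (Cons x ys)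
  show ?case
  proof (cases ys)
    case (Cons y zs)
    have "distinct ys" using Cons Cons.prems Cons.IH by (auto elim: non_backtracking.elims)
    have W: "\<And>i. Suc i < length (x # ys) \<Longrightarrow> adj ((x # ys) ! i) ((x # ys) ! Suc i)"
      using Cons.prems(1) walk_iff_nth by blast
    have N: "\<And>i. Suc (Suc i) < length (x # ys) \<Longrightarrow> (x # ys) ! i \<noteq> (x # ys) ! Suc (Suc i)"
      using Cons.prems(2) non_backtracking_iff_nth by blast
    have "x \<notin> set ys"
    proof
      assume "x \<in> set ys"
      define j where "j = (LEAST j. j < length ys \<and> ys ! j = x)"
      have ex: "\<exists>j. j < length ys \<and> ys ! j = x" using \<open>x \<in> set ys\<close> by (simp add: in_set_conv_nth)
      have jl: "j < length ys" and jx: "ys ! j = x" using LeastI_ex[OF ex] unfolding j_def by auto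
      have jmin: "\<And>i. i < j \<Longrightarrow> ys ! i \<noteq> x"
        using not_less_Least j_def jl by fastforce
      have j0: "j \<noteq> 0" using W[of 0] jx adj_irrefl Cons by (cases j) auto
      have j1: "j \<noteq> 1" using N[of 0] jx Cons jl by auto
      define c where "c = x # take j ys"
      have "is_cycle adj c"
        unfolding is_cycle_def
      proof (intro conjI allI impI)
        show "3 \<le> length c" using j0 j1 jl by (simp add: c_def)
        show "distinct c" using \<open>distinct ys\<close> jmin jl by (auto simp: c_def in_set_conv_nth)
        fix i assume "Suc i < length c"
        then have "Suc i < length (x # ys)" "i < j" using jl by (auto simp: c_def)
        then show "adj (c ! i) (c ! Suc i)"
          using W[of i] by (auto simp: c_def nth_Cons split: nat.splits)
      next
        have "last c = ys ! (j - 1)" using j0 jl by (cases ys) (simp_all add: c_def last_conv_nth)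
        moreover have "adj (ys ! (j - 1)) (ys ! j)" using W[of j] j0 jl by simp
        ultimately show "adj (last c) (hd c)" using jx by (simp add: c_def)
      qed
      with no_cycle show False by blast
    qed
    then show ?thesis using \<open>distinct ys\<close> by simp
  qed simp
qed simp

lemma reduced_closed_walk_trivial:
  assumes "walk adj zs" "non_backtracking zs" "hd zs = last zs"
  shows "length zs = 1"
proof -
  have "zs \<noteq> []" using assms(1) by (metis walk.simps(1))
  then show ?thesis using distinct_hd_eq_last reduced_walk_distinct assms by blast
qed

text \<open>Otherwise the reversal of the first walk followed by the second would be a backtrack-free
  closed walk.\<close>
lemma reduced_walks_branch_apart:
  assumes "walk adj (a # xs)" "non_backtracking (a # xs)"
    and "walk adj (a # ys)" "non_backtracking (a # ys)"
    and "xs \<noteq> []" "ys \<noteq> []" "hd xs \<noteq> hd ys"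
  shows "last xs \<noteq> last ys"
proof
  assume "last xs = last ys"
  have "walk adj (rev xs @ a # ys) \<and> non_backtracking (rev xs @ a # ys)"
  proof (rule reduced_walk_append)
    show "walk adj (rev xs @ [a])" using assms(1) walk_rev[of "a # xs"] by simp
    show "non_backtracking (rev xs @ [a])" using assms(2) non_backtracking_rev[of "a # xs"] by simp
    show "rev xs \<noteq> [] \<and> ys \<noteq> [] \<longrightarrow> last (rev xs) \<noteq> hd ys" using assms(7) by (simp add: last_rev)
  qed (fact assms(3), fact assms(4))
  moreover have "hd (rev xs @ a # ys) = last (rev xs @ a # ys)"
    using \<open>last xs = last ys\<close> assms(5,6) by (simp add: hd_rev)
  ultimately have "length (rev xs @ a # ys) = 1" using reduced_closed_walk_trivial by blast
  then show False using assms(5) by simp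
qed

lemma reduced_walk_unique:
  "walk adj xs \<Longrightarrow> non_backtracking xs \<Longrightarrow> walk adj ys \<Longrightarrow> non_backtracking ys
   \<Longrightarrow> hd xs = hd ys \<Longrightarrow> last xs = last ys \<Longrightarrow> xs = ys"
proof (induction xs arbitrary: ys)
  case (Cons a xs')
  obtain ys' where ys: "ys = a # ys'" using Cons.prems by (cases ys) auto
  have ys'_reduced: "walk adj (a # ys')" "non_backtracking (a # ys')"
    using Cons.prems(3,4) ys by simp_all
  consider "xs' = []" | "ys' = []" | "xs' \<noteq> []" "ys' \<noteq> []" by blast
  then show ?case
  proof cases
    case 1
    then have "hd ys = last ys" using Cons.prems(5,6) by simp
    then have "length ys = 1" using reduced_closed_walk_trivial Cons.prems(3,4) by blast
    then show ?thesis using 1 ys by simp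
  next
    case 2
    have "hd (a # xs') = last (a # xs')" using Cons.prems(5,6) 2 ys by simp
    then have "length (a # xs') = 1" using reduced_closed_walk_trivial Cons.prems(1,2) by blast
    then show ?thesis using 2 ys by simp
  next
    case 3
    have "last xs' = last ys'" using Cons.prems(6) ys 3 by simp
    then have "hd xs' = hd ys'"
      using reduced_walks_branch_apart[OF Cons.prems(1,2) ys'_reduced 3] by blast
    have "xs' = ys'"
    proof (rule Cons.IH)
      show "walk adj xs'" "walk adj ys'"
        using walk_tl[OF Cons.prems(1)] walk_tl[OF ys'_reduced(1)] 3 by simp_all
      show "non_backtracking xs'" "non_backtracking ys'"
        using non_backtracking_tl[OF Cons.prems(2)] non_backtracking_tl[OF ys'_reduced(2)]
          by simp_all
    qed fact+
    then show ?thesis using ys by simp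
  qed
qed simp

lemma exists_reduced_walk: "\<exists>xs. walk adj xs \<and> non_backtracking xs \<and> hd xs = x \<and> last xs = y"
proof -
  have "\<exists>xs. walk adj xs \<and> hd xs = x \<and> last xs = y" using connected[of x y]
  proof (induction rule: rtranclp_induct)
    case base then show ?case by (intro exI[of _ "[x]"]) simp
  next
    case (step y z)
    then obtain xs where "walk adj xs" "hd xs = x" "last xs = y" by blast
    with step(2) show ?case by (intro exI[of _ "xs @ [z]"]) (auto simp: walk_snoc hd_append)
  qed
  then show ?thesis using walk_reduce by metis
qed

end

section \<open>Rays and ends\<close>

definition ray_segment :: "(nat \<Rightarrow> 'v) \<Rightarrow> nat \<Rightarrow> nat \<Rightarrow> 'v list" where
  "ray_segment r a E = map (\<lambda>t. r (a + t)) [0..<Suc E]"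

lemma length_ray_segment [simp]: "length (ray_segment r a E) = Suc E"
  by (simp add: ray_segment_def)

lemma ray_segment_not_Nil [simp]: "ray_segment r a E \<noteq> []"
  by (simp add: ray_segment_def)

lemma nth_ray_segment: "i \<le> E \<Longrightarrow> ray_segment r a E ! i = r (a + i)"
  by (simp add: ray_segment_def nth_map_upt del: upt_Suc)

lemma hd_ray_segment [simp]: "hd (ray_segment r a E) = r a"
  by (simp add: ray_segment_def hd_map del: upt_Suc)

lemma last_ray_segment [simp]: "last (ray_segment r a E) = r (a + E)"
  by (simp add: ray_segment_def last_map del: upt_Suc)

lemma tl_ray_segment: "0 < E \<Longrightarrow> tl (ray_segment r a E) = ray_segment r (Suc a) (E - 1)"
  by (cases E) (simp_all add: ray_segment_def upt_conv_Cons map_Suc_upt[symmetric] o_def del: upt_Suc)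

lemma walk_ray_segment: "ray adj r \<Longrightarrow> walk adj (ray_segment r a E)"
  unfolding walk_iff_nth by (auto simp: ray_segment_def ray_def simp del: upt_Suc)

lemma non_backtracking_ray_segment: "ray adj r \<Longrightarrow> non_backtracking (ray_segment r a E)"
  unfolding non_backtracking_iff_nth by (auto simp: ray_segment_def ray_def simp del: upt_Suc)

lemma ray_shift: "ray adj r \<Longrightarrow> ray adj (\<lambda>n. r (n + k))"
  by (simp add: ray_def)

lemma ray_comp_isom: "isom adj g \<Longrightarrow> ray adj r \<Longrightarrow> ray adj (g \<circ> r)"
  unfolding ray_def isom_def by (auto simp: bij_is_inj inj_eq)

lemma same_end_refl: "same_end r r"
  unfolding same_end_def by blast

lemma same_end_sym: "same_end r s \<Longrightarrow> same_end s r"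
  unfolding same_end_def by metis

lemma same_end_trans: "same_end r s \<Longrightarrow> same_end s t \<Longrightarrow> same_end r t"
proof -
  assume "same_end r s" "same_end s t"
  then obtain k m k' m' where 1: "\<And>n. r (n + k) = s (n + m)" and 2: "\<And>n. s (n + k') = t (n + m')"
    unfolding same_end_def by blast
  have "r (n + (k + k')) = t (n + (m + m'))" for n
    using 1[of "n + k'"] 2[of "n + m"] by (simp add: ac_simps)
  then show ?thesis unfolding same_end_def by blast
qed

lemma same_end_comp: "same_end r s \<Longrightarrow> same_end (g \<circ> r) (g \<circ> s)"
  unfolding same_end_def o_def by metis

lemma same_end_shift: "same_end (\<lambda>n. r (n + k)) r"
  unfolding same_end_def by (rule exI[of _ 0], rule exI[of _ k]) simp

lemma same_end_comp_comp: "same_end (d \<circ> a) b \<Longrightarrow> same_end (c \<circ> b) t \<Longrightarrow> same_end ((c \<circ> d) \<circ> a) t"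
  using same_end_comp[of "d \<circ> a" b c] same_end_trans by (simp add: o_assoc)

lemma same_end_comp_cong:
  "same_end a a' \<Longrightarrow> same_end b b' \<Longrightarrow> same_end (c \<circ> a) b \<Longrightarrow> same_end (c \<circ> a') b'"
  by (meson same_end_comp same_end_sym same_end_trans)

lemma same_end_inv_comp: "bij g \<Longrightarrow> same_end (g \<circ> s) t \<Longrightarrow> same_end (inv g \<circ> t) s"
  using same_end_comp[of "g \<circ> s" t "inv g"] by (simp add: o_assoc bij_is_inj same_end_sym)

lemma same_end_if_inv_fixes: "bij g \<Longrightarrow> same_end (inv g \<circ> s) s \<Longrightarrow> same_end (g \<circ> s) s"
  using same_end_inv_comp[of "inv g" s s] by (simp add: bij_imp_bij_inv inv_inv_eq)

context tree
begin

lemma ray_distinct: assumes "ray adj r" "i < j" shows "r i \<noteq> r j"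
proof
  assume "r i = r j"
  let ?w = "ray_segment r i (j - i)"
  have "distinct ?w"
    using reduced_walk_distinct walk_ray_segment non_backtracking_ray_segment assms(1) by blast
  moreover have "?w ! 0 = ?w ! (j - i)" using \<open>r i = r j\<close> assms(2) by (simp add: nth_ray_segment)
  ultimately show False using assms(2) nth_eq_iff_index_eq[of ?w 0 "j - i"] by simp
qed

end

section \<open>Isometries translating rays\<close>

definition translates :: "('v \<Rightarrow> 'v \<Rightarrow> bool) \<Rightarrow> ('v \<Rightarrow> 'v) \<Rightarrow> (nat \<Rightarrow> 'v) \<Rightarrow> nat \<Rightarrow> bool" where
  "translates adj f r D \<longleftrightarrow> ray adj r \<and> 0 < D \<and> (\<forall>n. f (r n) = r (n + D))"

lemma translates_ray: "translates adj f r D \<Longrightarrow> ray adj r"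
  by (simp add: translates_def)

lemma translates_funpow: "translates adj f r D \<Longrightarrow> (f ^^ j) (r n) = r (n + j * D)"
  by (induction j arbitrary: n) (auto simp: translates_def ac_simps)

lemma translates_funpow_translates:
  "translates adj f r D \<Longrightarrow> 0 < j \<Longrightarrow> translates adj (f ^^ j) r (j * D)"
  using translates_funpow[of adj f r D j] by (auto simp: translates_def)

lemma translates_same_end: "translates adj f r D \<Longrightarrow> same_end (f \<circ> r) r"
  unfolding translates_def same_end_def by (rule exI[of _ 0], rule exI[of _ D]) simp

lemma fixed_end_cases:
  assumes "bij f" and r: "ray adj r" and fixed: "same_end (f \<circ> r) r"
  shows "(\<exists>k. \<forall>n\<ge>k. f (r n) = r n)
    \<or> (\<exists>k D. translates adj f (\<lambda>n. r (n + k)) D)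
    \<or> (\<exists>k D. translates adj (inv f) (\<lambda>n. r (n + k)) D)"
proof -
  obtain k m where e: "\<And>n. f (r (n + k)) = r (n + m)" using fixed unfolding same_end_def by auto
  consider "m = k" | "k < m" | "m < k" by linarith
  then show ?thesis
  proof cases
    case 1
    then have "\<forall>n\<ge>k. f (r n) = r n" using e by (metis le_add_diff_inverse2)
    then show ?thesis by blast
  next
    case 2
    have "f (r (n + k)) = r (n + (m - k) + k)" for n using e[of n] 2 by simp
    then have "translates adj f (\<lambda>n. r (n + k)) (m - k)"
      using ray_shift[OF r] 2 by (simp add: translates_def)
    then show ?thesis by blast
  next
    case 3
    have "inv f (r (n + m)) = r (n + (k - m) + m)" for n using e[of n] 3 \<open>bij f\<close>
      by (metis add.commute add.left_commute bij_is_inj inv_f_f le_add_diff_inverse2 less_imp_le)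
    then have "translates adj (inv f) (\<lambda>n. r (n + m)) (k - m)"
      using ray_shift[OF r] 3 by (simp add: translates_def)
    then show ?thesis by blast
  qed
qed

text \<open>Powers are needed: an inversion of an edge fixes no vertex but its square does.\<close>
definition hyperbolic :: "('v \<Rightarrow> 'v) \<Rightarrow> bool" where
  "hyperbolic f \<longleftrightarrow> (\<forall>p > 0. \<forall>v. (f ^^ p) v \<noteq> v)"

lemma hyperbolic_fixes_no_vertex: "hyperbolic f \<Longrightarrow> f v \<noteq> v"
  unfolding hyperbolic_def by (metis One_nat_def funpow.simps(2) funpow_0 o_apply zero_less_one)

lemma hyperbolic_funpow: "hyperbolic f \<Longrightarrow> 0 < k \<Longrightarrow> hyperbolic (f ^^ k)"
  unfolding hyperbolic_def by (simp add: funpow_mult)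

lemma hyperbolic_comp_self: "hyperbolic f \<Longrightarrow> hyperbolic (f \<circ> f)"
  using hyperbolic_funpow[of f 2] by (simp add: numeral_2_eq_2)

lemma hyperbolic_inv: "bij f \<Longrightarrow> hyperbolic f \<Longrightarrow> hyperbolic (inv f)"
  unfolding hyperbolic_def by (metis bij_fn bij_inv_eq_iff inv_fn)

text \<open>The repelling ray of f: pull r back by a power of f large enough that the choice of the
  power does not matter.\<close>
definition backward_ray :: "('v \<Rightarrow> 'v) \<Rightarrow> (nat \<Rightarrow> 'v) \<Rightarrow> nat \<Rightarrow> nat \<Rightarrow> 'v" where
  "backward_ray f r D n = (inv f ^^ n) (r (n * D - n))"

lemma backward_ray_eq:
  assumes "bij f" "translates adj f r D" "n \<le> j * D"
  shows "backward_ray f r D n = (inv f ^^ j) (r (j * D - n))"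
proof -
  have D: "0 < D" using assms(2) by (simp add: translates_def)
  have inv_shift: "inv f (r (n + D)) = r n" for n
    using assms(1,2) unfolding translates_def by (metis bij_is_inj inv_f_f)
  have step: "(inv f ^^ Suc j) (r (Suc j * D - n)) = (inv f ^^ j) (r (j * D - n))"
    if "n \<le> j * D" for j
  proof -
    have "Suc j * D - n = (j * D - n) + D" using that by simp
    then show ?thesis using inv_shift by (simp add: funpow_Suc_right del: funpow.simps)
  qed
  have stable: "(inv f ^^ (j + k)) (r ((j + k) * D - n)) = (inv f ^^ j) (r (j * D - n))"
    if "n \<le> j * D" for j k
  proof (induction k)
    case (Suc k)
    have "n \<le> (j + k) * D" using that by (metis add_leD1 add_mult_distrib le_trans order_refl)
    then show ?case using step[of "j + k"] Suc by simp
  qed simp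
  have "n \<le> n * D" using D by simp
  then show ?thesis
    unfolding backward_ray_def using stable[of n "j - n"] stable[of j "n - j"] assms(3)
    by (cases "n \<le> j") simp_all
qed

context tree
begin

lemma translated_rays_same_end_if_meet:
  assumes r: "translates adj f r D" and s: "translates adj f s D'" and meet: "r a = s b"
  shows "same_end r s"
proof -
  have r_ray: "ray adj r" and D: "0 < D" and fr: "\<And>n. f (r n) = r (n + D)"
    using r by (auto simp: translates_def)
  have s_ray: "ray adj s" and fs: "\<And>n. f (s n) = s (n + D')"
    using s by (auto simp: translates_def)
  have "r (a + D) = s (b + D')" using fr[of a] fs[of b] meet by simp
  then have segments: "ray_segment r a D = ray_segment s b D'"
    using reduced_walk_unique walk_ray_segment non_backtracking_ray_segment r_ray s_ray meet
    by (metis hd_ray_segment last_ray_segment)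
  then have "D = D'" by (metis length_ray_segment Suc_inject)
  have near: "r (a + t) = s (b + t)" if "t \<le> D" for t
    using nth_ray_segment[OF that, of r a] nth_ray_segment[of t D' s b] that \<open>D = D'\<close> segments
      by metis
  have "r (a + t) = s (b + t)" for t
  proof (induction t rule: less_induct)
    case (less t)
    show ?case
    proof (cases "t \<le> D")
      case True then show ?thesis using near by simp
    next
      case False
      then have "r (a + (t - D)) = s (b + (t - D))" using less[of "t - D"] D by simp
      then have "f (r (a + (t - D))) = f (s (b + (t - D)))" by simp
      then show ?thesis using fr fs \<open>D = D'\<close> False by (simp add: add.commute add.left_commute)
    qed
  qed
  then show ?thesis unfolding same_end_def by (metis add.commute)
qed

lemma shortest_bridge:
  fixes r s :: "nat \<Rightarrow> 'v"
  assumes disjoint: "\<nexists>a b. r a = s b"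
  obtains a b W where "walk adj W" "non_backtracking W" "hd W = r a" "last W = s b" "2 \<le> length W"
    "hd (tl W) \<notin> range r" "last (butlast W) \<notin> range s"
proof -
  define bridge where "bridge n \<longleftrightarrow> (\<exists>a b W. walk adj W \<and> non_backtracking W
    \<and> hd W = r a \<and> last W = s b \<and> length W = n)" for n
  have "bridge (length W)" if "walk adj W" "non_backtracking W" "hd W = r 0" "last W = s 0" for W
    using that unfolding bridge_def by blast
  then have "\<exists>n. bridge n" using exists_reduced_walk by blast
  define n where "n = (LEAST n. bridge n)"
  have shortest: "\<not> bridge m" if "m < n" for m using not_less_Least that unfolding n_def by blast
  obtain a b W where W: "walk adj W" "non_backtracking W" "hd W = r a" "last W = s b" "length W = n"
    using LeastI_ex[OF \<open>\<exists>n. bridge n\<close>] unfolding n_def bridge_def by blast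
  have "W \<noteq> []" using W(1) by auto
  moreover have "hd W \<noteq> last W" using W(3,4) disjoint by metis
  ultimately have "2 \<le> length W" by (cases W; cases "tl W") auto
  then have tlW: "tl W \<noteq> []" "butlast W \<noteq> []" by (cases W; auto)+
  have "hd (tl W) \<notin> range r"
  proof
    assume "hd (tl W) \<in> range r"
    then obtain c where "hd (tl W) = r c" by blast
    moreover have "last (tl W) = s b" using W(4) tlW(1) by (simp add: last_tl)
    moreover have "walk adj (tl W)" "non_backtracking (tl W)"
      using W(1,2) \<open>W \<noteq> []\<close> tlW(1) walk_tl non_backtracking_tl by (metis list.collapse)+
    ultimately have "bridge (n - 1)" unfolding bridge_def using W(5) by (metis length_tl)
    then show False using shortest \<open>2 \<le> length W\<close> W(5) by simp
  qed
  moreover have "last (butlast W) \<notin> range s"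
  proof
    assume "last (butlast W) \<in> range s"
    then obtain c where "last (butlast W) = s c" by blast
    moreover have "hd (butlast W) = r a" using W(3) tlW(2) by (cases W) auto
    ultimately have "bridge (n - 1)" unfolding bridge_def
      using walk_butlast[OF W(1) \<open>2 \<le> length W\<close>] non_backtracking_butlast[OF W(2)] W(5)
      by (metis length_butlast)
    then show False using shortest \<open>2 \<le> length W\<close> W(5) by simp
  qed
  ultimately show ?thesis using that W(1-4) \<open>2 \<le> length W\<close> by blast
qed

text \<open>If the rays were disjoint, a shortest bridge W between them, preceded by the backwards
  r-segment from r (a + D) and followed by the s-segment up to s (b + D'), would be a backtrack-free
  walk from f (r a) to f (s b) longer than its image under f.\<close>
lemma translated_rays_meet:
  assumes f: "isom adj f" and r: "translates adj f r D" and s: "translates adj f s D'"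
  shows "\<exists>a b. r a = s b"
proof (rule ccontr)
  assume "\<nexists>a b. r a = s b"
  then obtain a b W where W: "walk adj W" "non_backtracking W" "hd W = r a" "last W = s b"
    and "2 \<le> length W" and second: "hd (tl W) \<notin> range r"
    and penultimate: "last (butlast W) \<notin> range s"
    by (rule shortest_bridge)
  have r_ray: "ray adj r" and D: "0 < D" and fr: "\<And>n. f (r n) = r (n + D)"
    using r by (auto simp: translates_def)
  have s_ray: "ray adj s" and D': "0 < D'" and fs: "\<And>n. f (s n) = s (n + D')"
    using s by (auto simp: translates_def)
  have "W \<noteq> []" "tl W \<noteq> []" using \<open>2 \<le> length W\<close> by (cases W; auto)+
  let ?R = "rev (ray_segment r a D)" and ?S = "ray_segment s b D'"
  have R: "walk adj ?R" "non_backtracking ?R" "last ?R = r a" "hd ?R = r (a + D)"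
    "last (butlast ?R) = r (Suc a)"
    using walk_ray_segment[OF r_ray] non_backtracking_ray_segment[OF r_ray] D
    by (simp_all add: walk_rev non_backtracking_rev last_rev hd_rev tl_ray_segment)
  have S: "walk adj ?S" "non_backtracking ?S" "hd ?S = s b" "last ?S = s (b + D')"
    "hd (tl ?S) = s (Suc b)"
    using walk_ray_segment[OF s_ray] non_backtracking_ray_segment[OF s_ray] D'
    by (simp_all add: tl_ray_segment)
  have RW: "walk adj (?R @ tl W) \<and> non_backtracking (?R @ tl W)"
  proof (rule reduced_walk_glue[OF R(1,2) W(1,2)])
    show "last ?R = hd W" using R(3) W(3) by simp
    show "2 \<le> length ?R \<and> 2 \<le> length W \<longrightarrow> last (butlast ?R) \<noteq> hd (tl W)"
      using R(5) second by (metis rangeI)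
  qed
  have "walk adj ((?R @ tl W) @ tl ?S) \<and> non_backtracking ((?R @ tl W) @ tl ?S)"
  proof (rule reduced_walk_glue[OF conjunct1[OF RW] conjunct2[OF RW] S(1,2)])
    show "last (?R @ tl W) = hd ?S" using S(3) W(4) \<open>tl W \<noteq> []\<close> by (simp add: last_tl)
    have "last (butlast (?R @ tl W)) = last (butlast W)"
      using \<open>tl W \<noteq> []\<close> W(3) R(3) by (cases W) (auto simp: butlast_append)
    then show "2 \<le> length (?R @ tl W) \<and> 2 \<le> length ?S \<longrightarrow> last (butlast (?R @ tl W)) \<noteq> hd (tl ?S)"
      using S(5) penultimate by (metis rangeI)
  qed
  then have V: "walk adj (?R @ tl W @ tl ?S) \<and> non_backtracking (?R @ tl W @ tl ?S)" by simp
  have "tl ?S \<noteq> []" using D' by (simp add: tl_ray_segment)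
  then have ends: "hd (?R @ tl W @ tl ?S) = f (r a)" "last (?R @ tl W @ tl ?S) = f (s b)"
    using R(4) S(4) fr fs by (simp_all add: last_tl)
  have fW: "walk adj (map f W)" "non_backtracking (map f W)" "hd (map f W) = f (r a)"
    "last (map f W) = f (s b)"
    using walk_map_isom[OF f W(1)] non_backtracking_map_inj[OF _ W(2), of f] f W(3,4) \<open>W \<noteq> []\<close>
    by (auto simp: isom_def bij_is_inj hd_map last_map)
  have "?R @ tl W @ tl ?S = map f W" using reduced_walk_unique V fW ends by metis
  then have "length (?R @ tl W @ tl ?S) = length W" by simp
  then show False using D \<open>2 \<le> length W\<close> by simp
qed

lemma translated_rays_same_end:
  "isom adj f \<Longrightarrow> translates adj f r D \<Longrightarrow> translates adj f s D' \<Longrightarrow> same_end r s"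
  using translated_rays_meet translated_rays_same_end_if_meet by metis

lemma translates_inv_not_same_end:
  assumes r: "translates adj f r D" and s: "translates adj (inv f) s D'" and "bij f"
  shows "\<not> same_end r s"
proof
  assume "same_end r s"
  then obtain a c where e: "\<And>n. r (n + a) = s (n + c)" unfolding same_end_def by blast
  have fs: "f (s (m + D')) = s m" for m
    using s \<open>bij f\<close> unfolding translates_def by (metis bij_inv_eq_iff)
  have "r (D' + a + D) = f (r (D' + a))" using r unfolding translates_def by simp
  also have "\<dots> = f (s (D' + c))" using e[of D'] by simp
  also have "\<dots> = s c" using fs[of c] by (simp add: add.commute)
  also have "\<dots> = r a" using e[of 0] by simp
  finally have "r (D' + a + D) = r a" .
  moreover have "a < D' + a + D" using r unfolding translates_def by simp
  ultimately show False using ray_distinct[OF translates_ray[OF r]] by metis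
qed

lemma ray_backward_ray:
  assumes f: "isom adj f" and r: "translates adj f r D"
  shows "ray adj (backward_ray f r D)"
  unfolding ray_def
proof
  fix n :: nat
  have "bij f" using f isom_def by blast
  have "0 < D" and r_ray: "ray adj r" using r by (auto simp: translates_def)
  let ?j = "n + 2"
  have "k \<le> k * D" for k using \<open>0 < D\<close> by simp
  then have le: "?j \<le> ?j * D" .
  define m where "m = ?j * D - (n + 2)"
  have "?j * D - n = m + 2" "?j * D - Suc n = m + 1" "?j * D - Suc (Suc n) = m"
    using le unfolding m_def by simp_all
  then have vertices: "backward_ray f r D n = (inv f ^^ ?j) (r (m + 2))"
    "backward_ray f r D (Suc n) = (inv f ^^ ?j) (r (m + 1))"
    "backward_ray f r D (Suc (Suc n)) = (inv f ^^ ?j) (r m)"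
    using backward_ray_eq[OF \<open>bij f\<close> r, of _ ?j] le by simp_all
  have "adj (r (m + 2)) (r (m + 1))"
    using r_ray adj_sym
      unfolding ray_def by (metis add_2_eq_Suc' add_Suc_right add.commute plus_1_eq_Suc)
  moreover have "r (m + 2) \<noteq> r m" using r_ray unfolding ray_def by (metis add_2_eq_Suc')
  moreover have "isom adj (inv f ^^ ?j)" using isom_funpow isom_inv f by blast
  ultimately show "adj (backward_ray f r D n) (backward_ray f r D (Suc n))
      \<and> backward_ray f r D n \<noteq> backward_ray f r D (Suc (Suc n))"
    unfolding vertices isom_def by (metis bij_is_inj inj_eq)
qed

lemma translates_inv_backward_ray:
  assumes f: "isom adj f" and r: "translates adj f r D"
  shows "translates adj (inv f) (backward_ray f r D) D"
proof -
  have "bij f" using f isom_def by blast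
  have "0 < D" using r by (simp add: translates_def)
  have "backward_ray f r D (n + D) = inv f (backward_ray f r D n)" for n
  proof -
    have "n \<le> n * D" using \<open>0 < D\<close> by simp
    then have "backward_ray f r D (n + D) = (inv f ^^ Suc n) (r (Suc n * D - (n + D)))"
      by (intro backward_ray_eq[OF \<open>bij f\<close> r]) simp
    also have "\<dots> = inv f (backward_ray f r D n)"
      unfolding backward_ray_def using \<open>n \<le> n * D\<close> by (simp add: diff_add_inverse2)
    finally show ?thesis .
  qed
  then show ?thesis using ray_backward_ray[OF assms] \<open>0 < D\<close> by (simp add: translates_def)
qed

lemma translates_inv_other_ray:
  assumes f: "isom adj f" and r: "translates adj f r D"
  shows "\<exists>s. translates adj (inv f) s D \<and> \<not> same_end r s"
  using translates_inv_backward_ray[OF assms] translates_inv_not_same_end[OF r]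
    isom_def f by blast

lemma hyperbolic_axis:
  assumes u: "isom adj u" "hyperbolic u" and \<rho>: "ray adj \<rho>" "same_end (u \<circ> \<rho>) \<rho>"
  shows "\<exists>\<rho>\<^sub>a \<rho>\<^sub>r D. translates adj u \<rho>\<^sub>a D \<and> translates adj (inv u) \<rho>\<^sub>r D \<and> \<not> same_end \<rho>\<^sub>a \<rho>\<^sub>r"
proof -
  have "bij u" using u(1) isom_def by blast
  obtain k D where "translates adj u (\<lambda>n. \<rho> (n + k)) D \<or> translates adj (inv u) (\<lambda>n. \<rho> (n + k)) D"
    using fixed_end_cases[OF \<open>bij u\<close> \<rho>] hyperbolic_fixes_no_vertex[OF u(2)] by blast
  then obtain \<rho>\<^sub>a where "translates adj u \<rho>\<^sub>a D"
    using translates_inv_other_ray[OF isom_inv[OF u(1)]] inv_inv_eq[OF \<open>bij u\<close>] by metis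
  then show ?thesis using translates_inv_other_ray[OF u(1)] by blast
qed

lemma fixed_end_of_hyperbolic:
  assumes u: "isom adj u" "hyperbolic u"
    and \<rho>\<^sub>a: "translates adj u \<rho>\<^sub>a D" and \<rho>\<^sub>r: "translates adj (inv u) \<rho>\<^sub>r D'"
    and \<eta>: "ray adj \<eta>" "same_end (u \<circ> \<eta>) \<eta>"
  shows "same_end \<eta> \<rho>\<^sub>a \<or> same_end \<eta> \<rho>\<^sub>r"
proof -
  have "bij u" using u(1) isom_def by blast
  obtain k d where "translates adj u (\<lambda>n. \<eta> (n + k)) d \<or> translates adj (inv u) (\<lambda>n. \<eta> (n + k)) d"
    using fixed_end_cases[OF \<open>bij u\<close> \<eta>] hyperbolic_fixes_no_vertex[OF u(2)] by blast
  then have "same_end (\<lambda>n. \<eta> (n + k)) \<rho>\<^sub>a \<or> same_end (\<lambda>n. \<eta> (n + k)) \<rho>\<^sub>r"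
    using translated_rays_same_end[OF u(1) _ \<rho>\<^sub>a] translated_rays_same_end[OF isom_inv[OF u(1)] _ \<rho>\<^sub>r]
    by blast
  then show ?thesis using same_end_trans[OF same_end_sym[OF same_end_shift]] by blast
qed

end

section \<open>Discrete groups of tree isometries\<close>

lemma gen_group_base: "S \<subseteq> gen_group S"
  unfolding gen_group_def by blast

lemma gen_group_id: "id \<in> gen_group S"
  unfolding gen_group_def by blast

lemma gen_group_comp: "f \<in> gen_group S \<Longrightarrow> g \<in> gen_group S \<Longrightarrow> f \<circ> g \<in> gen_group S"
  unfolding gen_group_def by blast

lemma gen_group_inv: "f \<in> gen_group S \<Longrightarrow> inv f \<in> gen_group S"
  unfolding gen_group_def by blast

lemma gen_group_least:
  "S \<subseteq> H \<Longrightarrow> id \<in> H \<Longrightarrow> \<forall>f\<in>H. \<forall>g\<in>H. f \<circ> g \<in> H \<Longrightarrow> \<forall>f\<in>H. inv f \<in> H \<Longrightarrow> gen_group S \<subseteq> H"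
  unfolding gen_group_def by blast

lemma gen_group_isom: "\<forall>f\<in>S. isom adj f \<Longrightarrow> f \<in> gen_group S \<Longrightarrow> isom adj f"
  using gen_group_least[of S "{f. isom adj f}"] isom_id isom_comp isom_inv by blast

text \<open>A basic neighbourhood of id in the topology of pointwise convergence prescribes the values
  on a finite set of vertices.\<close>
lemma discrete_subgroup_finite_determining_set:
  assumes "discrete_subgroup G" "id \<in> G"
  shows "\<exists>F. finite F \<and> (\<forall>c\<in>G. (\<forall>x\<in>F. c x = x) \<longrightarrow> c = id)"
proof -
  let ?X = "product_topology (\<lambda>_. discrete_topology (UNIV::'a set)) (UNIV::'a set)"
  have "openin (discrete_topology G) {id}" using assms(2) by simp
  then have "openin (subtopology ?X G) {id}" using assms(1) unfolding discrete_subgroup_def by simp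
  then obtain U where U: "openin ?X U" "{id} = U \<inter> G" by (auto simp: openin_subtopology)
  then have "id \<in> U" by auto
  then obtain V where V: "finite {i \<in> UNIV. V i \<noteq> topspace (discrete_topology UNIV)}"
    "id \<in> Pi\<^sub>E UNIV V" "Pi\<^sub>E UNIV V \<subseteq> U"
    using U(1) unfolding openin_product_topology_alt by blast
  define F where "F = {i. V i \<noteq> UNIV}"
  have "c = id" if c: "c \<in> G" "\<forall>x\<in>F. c x = x" for c
  proof -
    have "c i \<in> V i" for i
    proof (cases "i \<in> F")
      case True
      then show ?thesis using c V(2) by (simp add: PiE_UNIV_domain Pi_iff)
    next
      case False then show ?thesis unfolding F_def by simp
    qed
    then have "c \<in> U \<inter> G" using V(3) c(1) by (auto simp: PiE_UNIV_domain)
    then show ?thesis using U(2) by blast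
  qed
  moreover have "finite F" using V(1) unfolding F_def by simp
  ultimately show ?thesis by blast
qed

lemma finite_relpowp_image: "locally_finite adj \<Longrightarrow> finite {y. (adj ^^ k) v y}"
proof (induction k)
  case (Suc k)
  have "{y. (adj ^^ Suc k) v y} = (\<Union>z\<in>{z. (adj ^^ k) v z}. {y. adj z y})"
    by (auto simp: relpowp_Suc_right)
  then show ?case using Suc by (simp add: locally_finite_def)
qed simp

lemma relpowp_isom_fixing:
  assumes "isom adj c" "c v = v" "(adj ^^ k) v y"
  shows "(adj ^^ k) v (c y)"
  using assms(3)
proof (induction k arbitrary: y)
  case (Suc k)
  then obtain z where "(adj ^^ k) v z" "adj z y" by (auto simp: relpowp_Suc_right)
  moreover have "adj (c z) (c y)" using assms(1) calculation(2) unfolding isom_def by blast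
  ultimately show ?case using Suc.IH by (auto simp: relpowp_Suc_right)
qed (use assms(2) in simp)

text \<open>An element of the stabiliser of v is determined by its restriction to a finite ball around v
  containing the determining set F, and maps that ball to itself.\<close>
lemma (in tree) finite_vertex_stabiliser:
  assumes "locally_finite adj" and F: "finite F"
    and determines: "\<forall>c\<in>G. (\<forall>x\<in>F. c x = x) \<longrightarrow> c = id"
    and comp: "\<And>f g. f \<in> G \<Longrightarrow> g \<in> G \<Longrightarrow> f \<circ> g \<in> G"
    and inv: "\<And>f. f \<in> G \<Longrightarrow> inv f \<in> G"
    and isom: "\<And>f. f \<in> G \<Longrightarrow> isom adj f"
  shows "finite {c \<in> G. c v = v}"
proof -
  have "\<exists>k. (adj ^^ k) v x" for x using connected[of v x] rtranclp_power by metis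
  then obtain dist where dist: "\<And>x. (adj ^^ dist x) v x" by metis
  define N where "N = Max (insert 0 (dist ` F))"
  define B where "B = {y. \<exists>k\<le>N. (adj ^^ k) v y}"
  have "B = (\<Union>k\<in>{..N}. {y. (adj ^^ k) v y})" unfolding B_def by auto
  then have "finite B" using finite_relpowp_image[OF assms(1)] by simp
  have "F \<subseteq> B"
  proof
    fix x assume "x \<in> F"
    then have "dist x \<le> N" unfolding N_def using F by simp
    then show "x \<in> B" unfolding B_def using dist by blast
  qed
  have "restrict c B \<in> Pi\<^sub>E B (\<lambda>_. B)" if "c \<in> G" "c v = v" for c
  proof -
    have "\<forall>i\<in>B. c i \<in> B" unfolding B_def
      using relpowp_isom_fixing[OF isom[OF that(1)] that(2)] by blast
    then show ?thesis by (simp add: restrict_PiE_iff)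
  qed
  then have into: "(\<lambda>c. restrict c B) ` {c \<in> G. c v = v} \<subseteq> Pi\<^sub>E B (\<lambda>_. B)" by blast
  have "inj_on (\<lambda>c. restrict c B) {c \<in> G. c v = v}"
  proof (rule inj_onI)
    fix c d assume c: "c \<in> {c \<in> G. c v = v}" and d: "d \<in> {c \<in> G. c v = v}"
      and e: "restrict c B = restrict d B"
    have "bij d" using d isom isom_def by blast
    have "\<forall>x\<in>F. (inv d \<circ> c) x = x"
    proof
      fix x assume "x \<in> F"
      then have "c x = d x" using e \<open>F \<subseteq> B\<close> by (metis restrict_apply' subsetD)
      then show "(inv d \<circ> c) x = x" using \<open>bij d\<close> by (simp add: bij_is_inj)
    qed
    then have "inv d \<circ> c = id" using determines comp inv c d by blast
    then have "c x = d x" for x using \<open>bij d\<close> by (metis bij_inv_eq_iff comp_apply id_apply)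
    then show "c = d" by auto
  qed
  then show ?thesis using inj_on_finite[OF _ into] \<open>finite B\<close> by (simp add: finite_PiE)
qed

lemma funpow_diff_eq_id:
  assumes "bij k" "a < b" "k ^^ a = k ^^ b"
  shows "k ^^ (b - a) = id"
proof -
  have "k ^^ b = k ^^ (b - a) \<circ> k ^^ a"
    using assms(2) by (metis funpow_add le_add_diff_inverse2 less_imp_le)
  then have "(k ^^ (b - a)) ((k ^^ a) x) = (k ^^ a) x" for x using assms(3) by (metis comp_apply)
  then have "(k ^^ (b - a)) y = y" for y using bij_fn[OF assms(1)] by (metis bij_inv_eq_iff)
  then show ?thesis by auto
qed

lemma conjugates_eq_commute:
  assumes "bij f" "j < j'" and same: "(inv f ^^ j) \<circ> c \<circ> (f ^^ j) = (inv f ^^ j') \<circ> c \<circ> (f ^^ j')"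
  shows "c ((f ^^ (j' - j)) x) = (f ^^ (j' - j)) (c x)"
proof -
  let ?p = "j' - j"
  have FI: "(f ^^ i) ((inv f ^^ i) x) = x" for i x
    using fun_cong[OF fn_o_inv_fn_is_id[OF \<open>bij f\<close>, of i], of x] by simp
  have split: "f ^^ j' = f ^^ ?p \<circ> f ^^ j"
    using assms(2) by (metis funpow_add le_add_diff_inverse2 less_imp_le)
  define y where "y = (inv f ^^ j) x"
  have fy: "(f ^^ j) y = x" unfolding y_def using FI by simp
  have "(inv f ^^ j) (c ((f ^^ j) y)) = (inv f ^^ j') (c ((f ^^ j') y))"
    using same by (metis comp_apply)
  then have "(f ^^ j') ((inv f ^^ j) (c ((f ^^ j) y))) = c ((f ^^ j') y)" using FI by simp
  moreover have "(f ^^ j') ((inv f ^^ j) z) = (f ^^ ?p) z" for z using split FI by simp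
  ultimately have "(f ^^ ?p) (c x) = c ((f ^^ j') y)" using fy by simp
  also have "\<dots> = c ((f ^^ ?p) x)" using split fy by simp
  finally show ?thesis by simp
qed

lemma infinite_domain_finite_image_collision:
  "infinite A \<Longrightarrow> f ` A \<subseteq> B \<Longrightarrow> finite B \<Longrightarrow> \<exists>x\<in>A. \<exists>y\<in>A. x < y \<and> f x = f y"
  for A :: "nat set"
  by (metis (mono_tags, lifting) inj_onI inj_on_finite linorder_neqE_nat)

locale proper_isometry_group = tree adj for adj :: "'v \<Rightarrow> 'v \<Rightarrow> bool" +
  fixes G :: "('v \<Rightarrow> 'v) set"
  assumes id_mem: "id \<in> G"
    and comp_mem: "f \<in> G \<Longrightarrow> g \<in> G \<Longrightarrow> f \<circ> g \<in> G"
    and inv_mem: "f \<in> G \<Longrightarrow> inv f \<in> G"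
    and isom_mem: "f \<in> G \<Longrightarrow> isom adj f"
    and finite_stabiliser: "finite {c \<in> G. c v = v}"

lemma (in tree) proper_isometry_group_gen_group:
  assumes "locally_finite adj" "\<forall>f\<in>S. isom adj f" "discrete_subgroup (gen_group S)"
  shows "proper_isometry_group adj (gen_group S)"
proof -
  obtain F where F: "finite F" "\<forall>c\<in>gen_group S. (\<forall>x\<in>F. c x = x) \<longrightarrow> c = id"
    using discrete_subgroup_finite_determining_set[OF assms(3) gen_group_id] by blast
  have "finite {c \<in> gen_group S. c v = v}" for v
    by (rule finite_vertex_stabiliser[OF assms(1) F])
      (simp_all add: gen_group_comp gen_group_inv gen_group_isom[OF assms(2)])
  then show ?thesis
    by (intro proper_isometry_group.intro proper_isometry_group_axioms.intro tree_axioms)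
      (simp_all add: gen_group_id gen_group_comp gen_group_inv gen_group_isom[OF assms(2)])
qed

context proper_isometry_group
begin

lemma funpow_mem: "f \<in> G \<Longrightarrow> f ^^ n \<in> G"
  by (induction n) (auto simp: id_mem comp_mem)

lemma bij_mem: "f \<in> G \<Longrightarrow> bij f"
  using isom_mem isom_def by blast

lemma hyperbolic_if_infinite_order:
  assumes h: "h \<in> G" and "\<forall>n::nat. n > 0 \<longrightarrow> h ^^ n \<noteq> id"
  shows "hyperbolic h"
  unfolding hyperbolic_def
proof (intro allI impI notI)
  fix n v assume "0 < n" and fixed: "(h ^^ n) v = v"
  let ?k = "h ^^ n"
  have "(?k ^^ j) v = v" for j by (induction j) (use fixed in auto)
  then have "(\<lambda>j. ?k ^^ j) ` UNIV \<subseteq> {c \<in> G. c v = v}" using funpow_mem[OF funpow_mem[OF h]] by auto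
  then obtain a b where "a < b" "?k ^^ a = ?k ^^ b"
    using infinite_domain_finite_image_collision[OF infinite_UNIV_nat _ finite_stabiliser] by blast
  then have "h ^^ (n * (b - a)) = id"
    using funpow_diff_eq_id[OF bij_mem[OF funpow_mem[OF h]]] by (simp add: funpow_mult)
  then show False using assms(2) \<open>0 < n\<close> \<open>a < b\<close> by simp
qed

text \<open>The conjugates (inv f ^^ j) \<circ> c \<circ> (f ^^ j) with j \<ge> N all fix r 0, so two of them
  coincide by finiteness of the stabiliser.\<close>
lemma commutes_with_power_if_fixes_tail:
  assumes f: "f \<in> G" "translates adj f r D" and c: "c \<in> G" "\<And>n. N \<le> n \<Longrightarrow> c (r n) = r n"
  shows "\<exists>p>0. \<forall>x. c ((f ^^ p) x) = (f ^^ p) (c x)"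
proof -
  have "bij f" using bij_mem f(1) by blast
  have IF: "(inv f ^^ j) ((f ^^ j) x) = x" for j x
    using fun_cong[OF inv_fn_o_fn_is_id[OF \<open>bij f\<close>, of j], of x] by simp
  have "0 < D" using f(2) unfolding translates_def by blast
  define conj where "conj j = (inv f ^^ j) \<circ> c \<circ> (f ^^ j)" for j
  have "conj j \<in> G" for j
    unfolding conj_def
      by (rule comp_mem[OF comp_mem[OF funpow_mem[OF inv_mem[OF f(1)]] c(1)] funpow_mem[OF f(1)]])
  moreover have "conj j (r 0) = r 0" if "N \<le> j" for j
  proof -
    have "(f ^^ j) (r 0) = r (j * D)" using translates_funpow[OF f(2), where j=j and n=0] by simp
    moreover have "N \<le> j * D" using that \<open>0 < D\<close> le_trans[of N j "j * D"] by simp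
    ultimately have "c ((f ^^ j) (r 0)) = (f ^^ j) (r 0)" using c(2) by simp
    then show ?thesis using IF unfolding conj_def by simp
  qed
  ultimately have "conj ` {N..} \<subseteq> {c \<in> G. c (r 0) = r 0}" by auto
  then obtain j j' where "j < j'" and same: "conj j = conj j'"
    using infinite_domain_finite_image_collision[OF infinite_Ici _ finite_stabiliser] by blast
  then have "c ((f ^^ (j' - j)) x) = (f ^^ (j' - j)) (c x)" for x
    using conjugates_eq_commute[OF \<open>bij f\<close> \<open>j < j'\<close>] unfolding conj_def by blast
  then show ?thesis using \<open>j < j'\<close> by (intro exI[of _ "j' - j"]) simp
qed

lemma fixes_end_if_commutes_with_power:
  assumes g: "g \<in> G" and f: "f \<in> G" and "0 < p" and commute: "\<And>x. g ((f ^^ p) x) = (f ^^ p) (g x)"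
    and s: "translates adj (inv f) s D'"
  shows "same_end (g \<circ> s) s"
proof -
  have "bij f" "bij (f ^^ p)" using bij_mem f funpow_mem by blast+
  have commute_inv: "(inv f ^^ p) (g x) = g ((inv f ^^ p) x)" for x
    using commute inv_fn[OF \<open>bij f\<close>, of p] by (metis \<open>bij (f ^^ p)\<close> bij_inv_eq_iff)
  have "translates adj (inv f ^^ p) s (p * D')" by (rule translates_funpow_translates[OF s \<open>0 < p\<close>])
  moreover have "translates adj (inv f ^^ p) (g \<circ> s) (p * D')"
    using calculation commute_inv ray_comp_isom[OF isom_mem[OF g] translates_ray[OF s]]
    unfolding translates_def by simp
  ultimately show ?thesis
    using translated_rays_same_end[OF isom_funpow[OF isom_inv[OF isom_mem[OF f]]]] same_end_sym
      by blast
qed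

text \<open>c = g ^^ D \<circ> inv f ^^ e fixes a tail of r: there both g ^^ D and f ^^ e move vertices
  by e * D.\<close>
lemma power_commutes_if_translates_same_end:
  assumes f: "f \<in> G" "translates adj f r D" and g: "g \<in> G" "translates adj g r' e"
    and "same_end r' r"
  shows "\<exists>p>0. \<forall>x. (g ^^ D) ((f ^^ p) x) = (f ^^ p) ((g ^^ D) x)"
proof -
  have "bij f" using bij_mem f(1) by blast
  have IF: "(inv f ^^ j) ((f ^^ j) x) = x" for j x
    using fun_cong[OF inv_fn_o_fn_is_id[OF \<open>bij f\<close>, of j], of x] by simp
  obtain k m where common: "\<And>n. r' (n + k) = r (n + m)"
    using \<open>same_end r' r\<close> unfolding same_end_def by blast
  define c where "c = (g ^^ D) \<circ> (inv f ^^ e)"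
  have "c \<in> G"
    unfolding c_def by (rule comp_mem[OF funpow_mem[OF g(1)] funpow_mem[OF inv_mem[OF f(1)]]])
  have "c (r n) = r n" if "m + e * D \<le> n" for n
  proof -
    define t where "t = n - m - e * D"
    have n: "n = t + m + e * D" using that unfolding t_def by simp
    have "(f ^^ e) (r (t + m)) = r n"
      using translates_funpow[OF f(2), where j=e and n="t + m"] n by simp
    then have "(inv f ^^ e) (r n) = r (t + m)" using IF by metis
    moreover have "(g ^^ D) (r' (t + k)) = r' ((t + D * e) + k)"
      using translates_funpow[OF g(2), where j=D and n="t + k"] by (simp add: ac_simps)
    then have "(g ^^ D) (r (t + m)) = r ((t + D * e) + m)" using common by metis
    ultimately show ?thesis using n unfolding c_def by (simp add: ac_simps)
  qed
  then obtain p where "0 < p" and commute: "\<And>x. c ((f ^^ p) x) = (f ^^ p) (c x)"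
    using commutes_with_power_if_fixes_tail[OF f \<open>c \<in> G\<close>] by blast
  have gD: "(g ^^ D) x = c ((f ^^ e) x)" for x unfolding c_def using IF by simp
  have "(f ^^ e) ((f ^^ p) x) = (f ^^ p) ((f ^^ e) x)" for x
    by (metis add.commute comp_apply funpow_add)
  then have "(g ^^ D) ((f ^^ p) x) = (f ^^ p) ((g ^^ D) x)" for x
    unfolding gD by (simp add: commute)
  then show ?thesis using \<open>0 < p\<close> by blast
qed

text \<open>Some power of f commutes with a power of g, hence fixes the repelling end of g; that end
  cannot be the attracting end of f, so it is the repelling one, which g therefore fixes.\<close>
lemma fixes_repelling_end_if_translates_same_end:
  assumes f: "f \<in> G" "hyperbolic f" "translates adj f r D" "translates adj (inv f) s D'"
    and g: "g \<in> G" "translates adj g r' e" and "same_end r' r"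
  shows "same_end (g \<circ> s) s"
proof -
  have "bij f" "bij g" using bij_mem f(1) g(1) by blast+
  obtain p where "0 < p" and commute: "\<And>x. (g ^^ D) ((f ^^ p) x) = (f ^^ p) ((g ^^ D) x)"
    using power_commutes_if_translates_same_end[OF f(1,3) g \<open>same_end r' r\<close>] by blast
  obtain \<eta> where \<eta>: "translates adj (inv g) \<eta> e" and "\<not> same_end r' \<eta>"
    using translates_inv_other_ray[OF isom_mem[OF g(1)] g(2)] by blast
  have "0 < D" using f(3) unfolding translates_def by blast
  have "same_end ((f ^^ p) \<circ> \<eta>) \<eta>"
    using fixes_end_if_commutes_with_power[OF funpow_mem[OF f(1)] g(1) \<open>0 < D\<close> _ \<eta>] commute by metis
  then obtain k d where "translates adj (f ^^ p) (\<lambda>n. \<eta> (n + k)) d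
      \<or> translates adj (inv (f ^^ p)) (\<lambda>n. \<eta> (n + k)) d"
    using fixed_end_cases[OF bij_fn[OF \<open>bij f\<close>] translates_ray[OF \<eta>]]
      hyperbolic_fixes_no_vertex[OF hyperbolic_funpow[OF f(2) \<open>0 < p\<close>]] by blast
  then show ?thesis
  proof
    assume "translates adj (f ^^ p) (\<lambda>n. \<eta> (n + k)) d"
    moreover have "translates adj (f ^^ p) r (p * D)"
      by (rule translates_funpow_translates[OF f(3) \<open>0 < p\<close>])
    ultimately have "same_end r (\<lambda>n. \<eta> (n + k))"
      using translated_rays_same_end[OF isom_funpow[OF isom_mem[OF f(1)]]] by blast
    then have "same_end r' \<eta>" using \<open>same_end r' r\<close> same_end_shift same_end_trans by blast
    with \<open>\<not> same_end r' \<eta>\<close> show ?thesis by blast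
  next
    assume "translates adj (inv (f ^^ p)) (\<lambda>n. \<eta> (n + k)) d"
    then have "translates adj (inv f ^^ p) (\<lambda>n. \<eta> (n + k)) d" using inv_fn[OF \<open>bij f\<close>] by simp
    moreover have "translates adj (inv f ^^ p) s (p * D')"
      by (rule translates_funpow_translates[OF f(4) \<open>0 < p\<close>])
    ultimately have "same_end s (\<lambda>n. \<eta> (n + k))"
      using translated_rays_same_end[OF isom_funpow[OF isom_inv[OF isom_mem[OF f(1)]]]] by blast
    then have "same_end s \<eta>" using same_end_shift same_end_trans by blast
    moreover have "same_end (g \<circ> \<eta>) \<eta>"
      by (rule same_end_if_inv_fixes[OF \<open>bij g\<close> translates_same_end[OF \<eta>]])
    ultimately show ?thesis using same_end_comp same_end_sym same_end_trans by metis
  qed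
qed

lemma fixes_repelling_end:
  assumes f: "f \<in> G" "hyperbolic f" "translates adj f r D" "translates adj (inv f) s D'"
    and g: "g \<in> G" "same_end (g \<circ> r) r"
  shows "same_end (g \<circ> s) s"
proof -
  have "bij g" using bij_mem g(1) by blast
  consider (tail) k where "\<forall>n\<ge>k. g (r n) = r n"
    | (forward) k e where "translates adj g (\<lambda>n. r (n + k)) e"
    | (backward) k e where "translates adj (inv g) (\<lambda>n. r (n + k)) e"
    using fixed_end_cases[OF \<open>bij g\<close> translates_ray[OF f(3)] g(2)] by blast
  then show ?thesis
  proof cases
    case tail
    then obtain p where "0 < p" "\<And>x. g ((f ^^ p) x) = (f ^^ p) (g x)"
      using commutes_with_power_if_fixes_tail[OF f(1,3) g(1)] by blast
    then show ?thesis using fixes_end_if_commutes_with_power[OF g(1) f(1) _ _ f(4)] by blast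
  next
    case forward
    then show ?thesis
      using fixes_repelling_end_if_translates_same_end[OF f g(1) _ same_end_shift] by blast
  next
    case backward
    then have "same_end (inv g \<circ> s) s"
      using fixes_repelling_end_if_translates_same_end[OF f inv_mem[OF g(1)] _ same_end_shift]
        by blast
    then show ?thesis by (rule same_end_if_inv_fixes[OF \<open>bij g\<close>])
  qed
qed

end

section \<open>Elementary subgroups\<close>

lemma elementary_gen_group_empty: "elementary adj (gen_group {})"
proof -
  have "gen_group {} \<subseteq> {id}" by (rule gen_group_least) auto
  then have "\<forall>c\<in>gen_group {}. c v = v" for v :: 'a by auto
  then show ?thesis unfolding elementary_def by blast
qed

definition preserves_end_pair :: "(nat \<Rightarrow> 'v) \<Rightarrow> (nat \<Rightarrow> 'v) \<Rightarrow> ('v \<Rightarrow> 'v) \<Rightarrow> bool" where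
  "preserves_end_pair r s c \<longleftrightarrow>
     (same_end (c \<circ> r) r \<and> same_end (c \<circ> s) s) \<or> (same_end (c \<circ> r) s \<and> same_end (c \<circ> s) r)"

lemma elementary_gen_group_if_preserves_end_pair:
  assumes "ray adj r" "ray adj s" "\<not> same_end r s" and S: "\<forall>f\<in>S. bij f \<and> preserves_end_pair r s f"
  shows "elementary adj (gen_group S)"
proof -
  have "gen_group S \<subseteq> {c. bij c \<and> preserves_end_pair r s c}"
  proof (rule gen_group_least)
    show "id \<in> {c. bij c \<and> preserves_end_pair r s c}"
      unfolding preserves_end_pair_def by (simp add: same_end_refl)
    show "\<forall>f\<in>{c. bij c \<and> preserves_end_pair r s c}. \<forall>g\<in>{c. bij c \<and> preserves_end_pair r s c}.
        f \<circ> g \<in> {c. bij c \<and> preserves_end_pair r s c}"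
      unfolding preserves_end_pair_def using same_end_comp_comp bij_comp by blast
    show "\<forall>f\<in>{c. bij c \<and> preserves_end_pair r s c}. inv f \<in> {c. bij c \<and> preserves_end_pair r s c}"
      unfolding preserves_end_pair_def using same_end_inv_comp bij_imp_bij_inv by blast
  qed (use S in blast)
  then show ?thesis unfolding elementary_def preserves_end_pair_def using assms(1-3) by blast
qed

lemma square_fixes_end_if_elementary:
  assumes "elementary adj H" "h \<in> H" "\<And>v. h v \<noteq> v"
  shows "\<exists>\<rho>. ray adj \<rho> \<and> same_end ((h \<circ> h) \<circ> \<rho>) \<rho>"
  using assms unfolding elementary_def by (metis same_end_comp_comp)

context proper_isometry_group
begin

text \<open>Passing to u = h \<circ> h turns an h swapping two ends into a u fixing both, so every end
  relevant to an elementary group containing h is fixed by u, hence is an end of its axis.\<close>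
lemma preserves_axis_ends_if_elementary:
  assumes h: "h \<in> G" "hyperbolic h"
    and axis: "translates adj (h \<circ> h) \<rho>\<^sub>a D" "translates adj (inv (h \<circ> h)) \<rho>\<^sub>r D'"
    and c: "c \<in> G" "elementary adj (gen_group {c, h})"
  shows "preserves_end_pair \<rho>\<^sub>a \<rho>\<^sub>r c"
proof -
  let ?u = "h \<circ> h"
  have "?u \<in> G" using comp_mem h(1) by blast
  have u_hyp: "hyperbolic ?u" "hyperbolic (inv ?u)"
    using hyperbolic_comp_self[OF h(2)] hyperbolic_inv[OF bij_mem[OF \<open>?u \<in> G\<close>]] by blast+
  have axis': "translates adj (inv (inv ?u)) \<rho>\<^sub>a D"
    using axis(1) inv_inv_eq[OF bij_mem[OF \<open>?u \<in> G\<close>]] by simp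
  have both: "same_end (c \<circ> \<rho>\<^sub>a) \<rho>\<^sub>a \<and> same_end (c \<circ> \<rho>\<^sub>r) \<rho>\<^sub>r"
    if "same_end (c \<circ> \<rho>\<^sub>a) \<rho>\<^sub>a \<or> same_end (c \<circ> \<rho>\<^sub>r) \<rho>\<^sub>r"
    using that fixes_repelling_end[OF \<open>?u \<in> G\<close> u_hyp(1) axis c(1)]
      fixes_repelling_end[OF inv_mem[OF \<open>?u \<in> G\<close>] u_hyp(2) axis(2) axis' c(1)] by blast
  have axis_end: "same_end \<eta> \<rho>\<^sub>a \<or> same_end \<eta> \<rho>\<^sub>r" if "ray adj \<eta>" "same_end (?u \<circ> \<eta>) \<eta>" for \<eta>
    by (rule fixed_end_of_hyperbolic[OF isom_mem[OF \<open>?u \<in> G\<close>] u_hyp(1) axis that])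
  have in_group: "h \<in> gen_group {c, h}" "c \<in> gen_group {c, h}" using gen_group_base by blast+
  show ?thesis using c(2) unfolding elementary_def
  proof (elim disjE exE conjE)
    fix v assume "\<forall>g\<in>gen_group {c, h}. g v = v"
    then show ?thesis using in_group hyperbolic_fixes_no_vertex[OF h(2)] by blast
  next
    fix \<eta> assume \<eta>: "ray adj \<eta>" "\<forall>g\<in>gen_group {c, h}. same_end (g \<circ> \<eta>) \<eta>"
    then have "same_end (?u \<circ> \<eta>) \<eta>" using in_group same_end_comp_comp by blast
    then have "same_end (c \<circ> \<rho>\<^sub>a) \<rho>\<^sub>a \<or> same_end (c \<circ> \<rho>\<^sub>r) \<rho>\<^sub>r"
      using axis_end[OF \<eta>(1)] \<eta>(2) in_group same_end_comp_cong by blast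
    then show ?thesis using both unfolding preserves_end_pair_def by blast
  next
    fix \<eta> \<sigma> assume \<eta>\<sigma>: "ray adj \<eta>" "ray adj \<sigma>" "\<not> same_end \<eta> \<sigma>"
      "\<forall>g\<in>gen_group {c, h}. same_end (g \<circ> \<eta>) \<eta> \<and> same_end (g \<circ> \<sigma>) \<sigma>
          \<or> same_end (g \<circ> \<eta>) \<sigma> \<and> same_end (g \<circ> \<sigma>) \<eta>"
    have "same_end (?u \<circ> \<eta>) \<eta>" "same_end (?u \<circ> \<sigma>) \<sigma>"
      using \<eta>\<sigma>(4) in_group(1) same_end_comp_comp by blast+
    then have "same_end \<eta> \<rho>\<^sub>a \<or> same_end \<eta> \<rho>\<^sub>r" "same_end \<sigma> \<rho>\<^sub>a \<or> same_end \<sigma> \<rho>\<^sub>r"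
      using axis_end \<eta>\<sigma>(1,2) by blast+
    then have "(same_end \<eta> \<rho>\<^sub>a \<and> same_end \<sigma> \<rho>\<^sub>r) \<or> (same_end \<eta> \<rho>\<^sub>r \<and> same_end \<sigma> \<rho>\<^sub>a)"
      using \<eta>\<sigma>(3) same_end_sym same_end_trans by blast
    then show ?thesis
      using \<eta>\<sigma>(4) in_group(2) same_end_comp_cong unfolding preserves_end_pair_def by blast
  qed
qed

end

theorem lemma3p3:
  fixes adj :: "'v \<Rightarrow> 'v \<Rightarrow> bool"
    and g :: "nat \<Rightarrow> ('v \<Rightarrow> 'v)"
    and r :: nat
    and G :: "('v \<Rightarrow> 'v) set"
    and h :: "'v \<Rightarrow> 'v"
  assumes "simplicial_tree adj"
    and "locally_finite adj"
    and "\<forall>i\<in>{1..r}. isom adj (g i)"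
    and "G = gen_group (g ` {1..r})"
    and "discrete_subgroup G"
    and "\<not> elementary adj G"
    and "h \<in> G"
    and "\<forall>n::nat. n > 0 \<longrightarrow> (h ^^ n) \<noteq> id"
  shows "\<exists>i\<in>{1..r}. \<not> elementary adj (gen_group {g i, h})"
proof (rule ccontr)
  assume "\<not> ?thesis"
  then have elementary_pairs: "\<And>i. i \<in> {1..r} \<Longrightarrow> elementary adj (gen_group {g i, h})" by blast
  interpret tree adj using assms(1) by (rule tree_if_simplicial_tree)
  interpret proper_isometry_group adj G
    using proper_isometry_group_gen_group assms(2-5) by blast
  have hyp: "hyperbolic h" by (rule hyperbolic_if_infinite_order[OF assms(7,8)])
  obtain i where "i \<in> {1..r}" using assms(4,6) elementary_gen_group_empty by fastforce
  moreover have "h \<in> gen_group {g i, h}" using gen_group_base by blast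
  ultimately obtain \<rho> where "ray adj \<rho>" "same_end ((h \<circ> h) \<circ> \<rho>) \<rho>"
    using square_fixes_end_if_elementary elementary_pairs hyperbolic_fixes_no_vertex[OF hyp]
      by blast
  then obtain \<rho>\<^sub>a \<rho>\<^sub>r D where axis: "translates adj (h \<circ> h) \<rho>\<^sub>a D" "translates adj (inv (h \<circ> h)) \<rho>\<^sub>r D"
    and "\<not> same_end \<rho>\<^sub>a \<rho>\<^sub>r"
    using hyperbolic_axis[OF isom_mem[OF comp_mem[OF assms(7) assms(7)]] hyperbolic_comp_self[OF hyp]]
      by blast
  have "\<forall>f\<in>g ` {1..r}. bij f \<and> preserves_end_pair \<rho>\<^sub>a \<rho>\<^sub>r f"
    using preserves_axis_ends_if_elementary[OF assms(7) hyp axis] elementary_pairs bij_mem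
      gen_group_base assms(4) by blast
  then have "elementary adj G"
    using elementary_gen_group_if_preserves_end_pair translates_ray axis \<open>\<not> same_end \<rho>\<^sub>a \<rho>\<^sub>r\<close> assms(4)
    by metis
  with assms(6) show False ..
qed

end
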